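(* Let $\lambda_1,\lambda_2>0$ and let the input domain be the set of integers $\mathbb{Z}$. Let $\mathcal{M}_{\mathrm{skell}(\lambda_1,\lambda_2)}$ be the algorithm that adds to its input a random integer with the Skellam$(\lambda_1,\lambda_2)$ distribution, and let $f_Z(\cdot;\lambda_1,\lambda_2)$ be the probability mass function of that distribution. A bounded row vector $\vec x=(\dots,x_{-2},x_{-1},x_0,x_1,x_2,\dots)$ belongs to $\mathrm{rowcone}(\{\mathcal{M}_{\mathrm{skell}(\lambda_1,\lambda_2)}\})$ if for all integers $k$, $$\sum_{j=-\infty}^{\infty}(-1)^j f_Z(j;\lambda_1,\lambda_2)\,x_{k+j}\ \ge\ 0.$$
   Context: A random variable has the Skellam$(\lambda_1,\lambda_2)$ distribution if it equals $X-Y$ with $X,Y$ independent, $X\sim$ Poisson$(\lambda_1)$ and $Y\sim$ Poisson$(\lambda_2)$ (Poisson$(\lambda)$ has mass $e^{-\lambda}\lambda^k/k!$ on nonnegative integers $k$). An algorithm is identified with its output probabilities. For algorithms $\mathcal{M}$, $\mathcal{A}$ with $\mathrm{range}(\mathcal{M})\subseteq\mathrm{domain}(\mathcal{A})$ and independent randomness, $\mathcal{A}\circ\mathcal{M}$ runs $\mathcal{M}$ then $\mathcal{A}$ on its output. $\mathrm{CNF}(\mathrm{Priv})$ of a set of algorithms with domain $\mathbb{Z}$ is the smallest set $S$ containing $\mathrm{Priv}$ such that $\mathcal{M}\in S$ implies $\mathcal{A}\circ\mathcal{M}\in S$ for every such $\mathcal{A}$, and $\mathcal{M}_1,\mathcal{M}_2\in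 S$, $t\in[0,1]$ implies that the algorithm running $\mathcal{M}_1$ with probability $t$ and $\mathcal{M}_2$ with probability $1-t$ is in $S$. $\mathrm{rowcone}(\mathrm{Priv})=\{(c\,P[\mathcal{M}(n)=\omega])_{n\in\mathbb{Z}} : c\ge0,\ \mathcal{M}\in\mathrm{CNF}(\mathrm{Priv}),\ \omega\in\mathrm{range}(\mathcal{M})\}$. *)

theory Defs
  imports "HOL-Analysis.Analysis" "HOL-Probability.Probability"
begin

type_synonym alg = "int \<Rightarrow> int pmf"

definition skellam_pmf :: "real \<Rightarrow> real \<Rightarrow> int pmf" where
  "skellam_pmf l1 l2 =
     map_pmf (\<lambda>(x, y). int x - int y) (pair_pmf (poisson_pmf l1) (poisson_pmf l2))"

definition f_Z :: "int \<Rightarrow> real \<Rightarrow> real \<Rightarrow> real" where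
  "f_Z j l1 l2 = pmf (skellam_pmf l1 l2) j"

definition M_skell :: "real \<Rightarrow> real \<Rightarrow> alg" where
  "M_skell l1 l2 = (\<lambda>n. map_pmf (\<lambda>z. n + z) (skellam_pmf l1 l2))"

definition postproc :: "(int \<Rightarrow> int pmf) \<Rightarrow> alg \<Rightarrow> alg" where
  "postproc A M = (\<lambda>n. bind_pmf (M n) A)"

definition mixture :: "real \<Rightarrow> alg \<Rightarrow> alg \<Rightarrow> alg" where
  "mixture t M1 M2 = (\<lambda>n. bind_pmf (bernoulli_pmf t) (\<lambda>b. if b then M1 n else M2 n))"

inductive_set CNF :: "alg set \<Rightarrow> alg set" for Priv :: "alg set" where
  base: "M \<in> Priv \<Longrightarrow> M \<in> CNF Priv"
| post: "M \<in> CNF Priv \<Longrightarrow> postproc A M \<in> CNF Priv"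
| mix: "M1 \<in> CNF Priv \<Longrightarrow> M2 \<in> CNF Priv \<Longrightarrow> 0 \<le> t \<Longrightarrow> t \<le> 1
          \<Longrightarrow> mixture t M1 M2 \<in> CNF Priv"

definition alg_range :: "alg \<Rightarrow> int set" where
  "alg_range M = (\<Union>n. set_pmf (M n))"

definition rowcone :: "alg set \<Rightarrow> (int \<Rightarrow> real) set" where
  "rowcone Priv = {(\<lambda>n. c * pmf (M n) \<omega>) | c M \<omega>.
      c \<ge> 0 \<and> M \<in> CNF Priv \<and> \<omega> \<in> alg_range M}"

end

theory Submission
  imports Defs
begin

text \<open>Write \<open>T x k = \<Sum>\<^sub>j (-1)\<^sup>j f_Z(j) x(k+j)\<close> for the alternating Skellam transform
  of the row vector \<open>x\<close>. The generating function of the Skellam law is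
  \<open>exp (\<lambda>\<^sub>1 (t - 1) + \<lambda>\<^sub>2 (1/t - 1))\<close>; that of its alternating version is obtained by
  \<open>t \<mapsto> -t\<close>, so their product is the constant \<open>exp (-2\<lambda>\<^sub>1 - 2\<lambda>\<^sub>2)\<close>. Hence adding Skellam
  noise undoes the transform: \<open>E[T x (n + Z)] = exp (-2\<lambda>\<^sub>1 - 2\<lambda>\<^sub>2) x n\<close>. If \<open>T x \<ge> 0\<close>, then
  \<open>T x\<close> rescaled into \<open>[0,1]\<close> is the acceptance probability of a post-processing that
  outputs \<open>1\<close>, so \<open>x\<close> is a nonnegative multiple of the row of the output \<open>1\<close>.\<close>

lemma summable_on_pmf: "pmf p summable_on A"
  by (rule summable_on_iff_abs_summable_on_real[THEN iffD2],
      rule abs_summable_equivalent[THEN iffD2], rule pmf_abs_summable)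

lemma infsum_pmf_UNIV: "(\<Sum>\<^sub>\<infinity>x. pmf p x) = 1"
  using infsetsum_pmf_eq_1[of p UNIV] infsetsum_infsum[OF pmf_abs_summable[of p UNIV]] by simp

lemma summable_on_pmf_mult_bounded:
  fixes f :: "'a \<Rightarrow> real"
  assumes "\<And>x. \<bar>f x\<bar> \<le> B"
  shows "(\<lambda>x. pmf p x * f x) summable_on A"
proof -
  have "Infinite_Sum.abs_summable_on (\<lambda>x. B * pmf p x) A"
    by (rule summable_on_iff_abs_summable_on_real[THEN iffD1],
        intro summable_on_cmult_right summable_on_pmf)
  then have "Infinite_Sum.abs_summable_on (\<lambda>x. pmf p x * f x) A"
  proof (rule Infinite_Sum.abs_summable_on_comparison_test)
    fix x
    have "pmf p x * \<bar>f x\<bar> \<le> pmf p x * B"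
      by (rule mult_left_mono[OF assms pmf_nonneg])
    then show "norm (pmf p x * f x) \<le> norm (B * pmf p x)"
      using assms[of x] by (simp add: abs_mult mult.commute)
  qed
  then show ?thesis
    by (rule summable_on_iff_abs_summable_on_real[THEN iffD2])
qed

lemma abs_infsum_pmf_mult_le:
  fixes f :: "'a \<Rightarrow> real"
  assumes bound: "\<And>x. \<bar>f x\<bar> \<le> B"
  shows "\<bar>\<Sum>\<^sub>\<infinity>x. pmf p x * f x\<bar> \<le> B"
proof -
  have B: "(\<lambda>x. B * pmf p x) summable_on UNIV"
    by (intro summable_on_cmult_right summable_on_pmf)
  have total: "(\<Sum>\<^sub>\<infinity>x. B * pmf p x) = B"
    by (simp add: infsum_cmult_right summable_on_pmf infsum_pmf_UNIV)
  have upper: "(\<Sum>\<^sub>\<infinity>x. pmf p x * g x) \<le> B" if g: "\<And>x. \<bar>g x\<bar> \<le> B" for g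
  proof -
    have "pmf p x * g x \<le> B * pmf p x" for x
      using mult_left_mono[OF abs_le_D1[OF g] pmf_nonneg] by (simp add: mult.commute)
    then have "(\<Sum>\<^sub>\<infinity>x. pmf p x * g x) \<le> (\<Sum>\<^sub>\<infinity>x. B * pmf p x)"
      by (intro infsum_mono[OF summable_on_pmf_mult_bounded[OF g] B])
    with total show ?thesis by simp
  qed
  have "(\<Sum>\<^sub>\<infinity>x. pmf p x * f x) \<le> B" "(\<Sum>\<^sub>\<infinity>x. pmf p x * - f x) \<le> B"
    using bound by (intro upper; simp)+
  then show ?thesis
    by (simp add: infsum_uminus)
qed

lemma expectation_eq_infsum_pmf:
  fixes f :: "'a \<Rightarrow> real"
  assumes "\<And>x. \<bar>f x\<bar> \<le> B"
  shows "measure_pmf.expectation p f = (\<Sum>\<^sub>\<infinity>x. pmf p x * f x)"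
proof -
  have "Infinite_Set_Sum.abs_summable_on (\<lambda>x. pmf p x * f x) UNIV"
    by (rule abs_summable_equivalent[THEN iffD1],
        rule summable_on_iff_abs_summable_on_real[THEN iffD1],
        rule summable_on_pmf_mult_bounded[OF assms])
  then show ?thesis
    by (simp add: pmf_expectation_eq_infsetsum infsetsum_infsum)
qed

lemma pmf_mult_infsum_pmf_mult:
  fixes f :: "'a \<Rightarrow> 'b \<Rightarrow> real"
  assumes "\<And>a b. \<bar>f a b\<bar> \<le> B"
  shows "pmf p a * (\<Sum>\<^sub>\<infinity>b. pmf q b * f a b) = (\<Sum>\<^sub>\<infinity>b. pmf p a * pmf q b * f a b)"
  by (subst infsum_cmult_right[symmetric])
    (auto intro: summable_on_pmf_mult_bounded assms simp: mult.assoc)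

lemma summable_on_pmf_mult_pmf_mult:
  fixes f :: "'a \<Rightarrow> 'b \<Rightarrow> real"
  assumes "\<And>a b. \<bar>f a b\<bar> \<le> B"
  shows "(\<lambda>(a, b). pmf p a * pmf q b * f a b) summable_on A"
proof -
  have "pmf (pair_pmf p q) ab = pmf p (fst ab) * pmf q (snd ab)" for ab
    by (cases ab) (simp add: pmf_pair)
  then show ?thesis
    using summable_on_pmf_mult_bounded[of "case_prod f" B "pair_pmf p q" A] assms
    by (simp add: case_prod_unfold)
qed

lemma infsum_pmf_pmf_iterated:
  fixes f :: "'a \<Rightarrow> 'b \<Rightarrow> real"
  assumes "\<And>a b. \<bar>f a b\<bar> \<le> B"
  shows "(\<Sum>\<^sub>\<infinity>(a, b). pmf p a * pmf q b * f a b)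
       = (\<Sum>\<^sub>\<infinity>a. pmf p a * (\<Sum>\<^sub>\<infinity>b. pmf q b * f a b))"
proof -
  have "(\<lambda>(a, b). pmf p a * pmf q b * f a b) summable_on UNIV \<times> UNIV"
    by (rule summable_on_pmf_mult_pmf_mult[OF assms])
  from infsum_Sigma'_banach[OF this]
  have "(\<Sum>\<^sub>\<infinity>(a, b). pmf p a * pmf q b * f a b) = (\<Sum>\<^sub>\<infinity>a. \<Sum>\<^sub>\<infinity>b. pmf p a * pmf q b * f a b)"
    by simp
  also have "\<dots> = (\<Sum>\<^sub>\<infinity>a. pmf p a * (\<Sum>\<^sub>\<infinity>b. pmf q b * f a b))"
    by (intro infsum_cong pmf_mult_infsum_pmf_mult[OF assms, symmetric])
  finally show ?thesis .
qed

lemma infsum_pmf_pmf_swap: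
  fixes f :: "'a \<Rightarrow> 'b \<Rightarrow> real"
  assumes "\<And>a b. \<bar>f a b\<bar> \<le> B"
  shows "(\<Sum>\<^sub>\<infinity>a. pmf p a * (\<Sum>\<^sub>\<infinity>b. pmf q b * f a b))
       = (\<Sum>\<^sub>\<infinity>b. pmf q b * (\<Sum>\<^sub>\<infinity>a. pmf p a * f a b))"
proof -
  have "(\<lambda>(a, b). pmf p a * pmf q b * f a b) summable_on UNIV \<times> UNIV"
    by (rule summable_on_pmf_mult_pmf_mult[OF assms])
  then have swap: "(\<Sum>\<^sub>\<infinity>a. \<Sum>\<^sub>\<infinity>b. pmf p a * pmf q b * f a b)
      = (\<Sum>\<^sub>\<infinity>b. \<Sum>\<^sub>\<infinity>a. pmf p a * pmf q b * f a b)"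
    by (rule infsum_swap_banach)
  have "(\<Sum>\<^sub>\<infinity>a. pmf p a * (\<Sum>\<^sub>\<infinity>b. pmf q b * f a b))
      = (\<Sum>\<^sub>\<infinity>a. \<Sum>\<^sub>\<infinity>b. pmf p a * pmf q b * f a b)"
    by (intro infsum_cong pmf_mult_infsum_pmf_mult[OF assms])
  also have "\<dots> = (\<Sum>\<^sub>\<infinity>b. \<Sum>\<^sub>\<infinity>a. pmf q b * pmf p a * f a b)"
    unfolding swap by (simp add: mult.commute)
  also have "\<dots> = (\<Sum>\<^sub>\<infinity>b. pmf q b * (\<Sum>\<^sub>\<infinity>a. pmf p a * f a b))"
    using assms by (intro infsum_cong pmf_mult_infsum_pmf_mult[symmetric])
  finally show ?thesis .
qed

lemma poisson_pmf_mult_poisson_pmf: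
  assumes "l > 0" "k \<le> s"
  shows "pmf (poisson_pmf l) (s - k) * pmf (poisson_pmf l) k
       = exp (-2*l) * (l ^ s / fact s) * of_nat (s choose k)"
proof -
  have powers: "l ^ (s - k) * l ^ k = l ^ s"
    using assms(2) by (metis le_add_diff_inverse2 power_add)
  have exps: "exp (-l) * exp (-l) = exp (-2*l)"
    by (simp add: exp_add[symmetric])
  have "pmf (poisson_pmf l) (s - k) * pmf (poisson_pmf l) k
      = (l ^ (s - k) * l ^ k) * (exp (-l) * exp (-l)) / (fact (s - k) * fact k)"
    using assms by simp
  also have "\<dots> = l ^ s * exp (-2*l) / (fact (s - k) * fact k)"
    by (simp only: powers exps)
  also have "\<dots> = exp (-2*l) * (l ^ s / fact s) * of_nat (s choose k)"
    using assms by (simp add: binomial_fact mult.commute)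
  finally show ?thesis .
qed

lemma bij_betw_antidiagonal_nat: "bij_betw (\<lambda>(s, k). (s - k, k::nat)) (SIGMA s:UNIV. {..s}) UNIV"
  by (rule bij_betw_byWitness[where f'="\<lambda>(a, b). (a + b, b)"]) auto

text \<open>Grouping the terms by \<open>s = a + a'\<close>, the inner sum over \<open>a'\<close> is a multiple of
  \<open>\<Sum>\<^sub>k\<^sub>\<le>\<^sub>s (-1)\<^sup>k (s choose k)\<close>, which vanishes unless \<open>s = 0\<close>.\<close>
lemma infsum_poisson_alternating_convolution:
  fixes h :: "nat \<Rightarrow> real"
  assumes l: "l > 0" and hb: "\<And>s. \<bar>h s\<bar> \<le> B"
  shows "(\<Sum>\<^sub>\<infinity>a. pmf (poisson_pmf l) a *
            (\<Sum>\<^sub>\<infinity>a'. pmf (poisson_pmf l) a' * ((-1)^a' * h (a + a'))))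
         = exp (-2*l) * h 0"
proof -
  define w where "w = pmf (poisson_pmf l)"
  define F where "F = (\<lambda>(a, a'). w a * w a' * ((-1)^a' * h (a + a')))"
  define G where "G = (\<lambda>(s, k). w (s - k) * w k * ((-1)^k * h s))"
  have bnd: "\<bar>(-1)^a' * h (a + a')\<bar> \<le> B" for a a' :: nat
    using hb[of "a + a'"] by (simp add: abs_mult)
  have F_G: "F ((\<lambda>(s, k). (s - k, k)) sk) = G sk" if "sk \<in> (SIGMA s:UNIV. {..s})" for sk
    using that by (auto simp: F_def G_def)
  have "F summable_on UNIV"
    unfolding F_def w_def by (rule summable_on_pmf_mult_pmf_mult[OF bnd])
  then have "(\<lambda>sk. F ((\<lambda>(s, k). (s - k, k)) sk)) summable_on (SIGMA s:UNIV. {..s})"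
    by (rule summable_on_reindex_bij_betw[OF bij_betw_antidiagonal_nat, THEN iffD2])
  then have "G summable_on (SIGMA s:UNIV. {..s})"
    by (rule summable_on_cong[THEN iffD1, rotated]) (simp add: F_G)
  then have diag: "infsum G (SIGMA s:UNIV. {..s}) = (\<Sum>\<^sub>\<infinity>s. \<Sum>\<^sub>\<infinity>k\<in>{..s}. G (s, k))"
    by (rule infsum_Sigma_banach[symmetric])
  have binomial: "(\<Sum>\<^sub>\<infinity>k\<in>{..s}. G (s, k)) = (if s = 0 then exp (-2*l) * h 0 else 0)" for s
  proof -
    have "(\<Sum>\<^sub>\<infinity>k\<in>{..s}. G (s, k))
        = (\<Sum>k\<le>s. exp (-2*l) * (l ^ s / fact s) * h s * ((-1)^k * of_nat (s choose k)))"
      by (simp, intro sum.cong) (auto simp: G_def w_def poisson_pmf_mult_poisson_pmf[OF l])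
    also have "\<dots> = exp (-2*l) * (l ^ s / fact s) * h s * (\<Sum>k\<le>s. (-1)^k * of_nat (s choose k))"
      by (simp add: sum_distrib_left)
    finally show ?thesis
      using choose_alternating_sum[of s, where 'a=real] by auto
  qed
  have "(\<Sum>\<^sub>\<infinity>a. w a * (\<Sum>\<^sub>\<infinity>a'. w a' * ((-1)^a' * h (a + a')))) = infsum F UNIV"
    unfolding F_def w_def by (rule infsum_pmf_pmf_iterated[OF bnd, symmetric])
  also have "\<dots> = infsum (\<lambda>sk. F ((\<lambda>(s, k). (s - k, k)) sk)) (SIGMA s:UNIV. {..s})"
    by (rule infsum_reindex_bij_betw[OF bij_betw_antidiagonal_nat, symmetric])
  also have "\<dots> = infsum G (SIGMA s:UNIV. {..s})"
    by (rule infsum_cong) (simp add: F_G)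
  also have "\<dots> = (\<Sum>\<^sub>\<infinity>s::nat. if s = 0 then exp (-2*l) * h 0 else 0)"
    by (simp add: diag binomial)
  also have "\<dots> = exp (-2*l) * h 0"
    by (subst infsum_cong_neutral[where T="{0}"]) auto
  finally show ?thesis unfolding w_def .
qed

lemma infsum_f_Z_mult:
  fixes g :: "int \<Rightarrow> real"
  assumes bound: "\<And>j. \<bar>g j\<bar> \<le> B"
  shows "(\<Sum>\<^sub>\<infinity>j. f_Z j l1 l2 * g j)
       = (\<Sum>\<^sub>\<infinity>a. pmf (poisson_pmf l1) a * (\<Sum>\<^sub>\<infinity>b. pmf (poisson_pmf l2) b * g (int a - int b)))"
proof -
  define P where "P = pair_pmf (poisson_pmf l1) (poisson_pmf l2)"
  have "(\<Sum>\<^sub>\<infinity>j. f_Z j l1 l2 * g j) = measure_pmf.expectation (skellam_pmf l1 l2) g"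
    unfolding f_Z_def by (rule expectation_eq_infsum_pmf[OF bound, symmetric])
  also have "\<dots> = measure_pmf.expectation P (\<lambda>(a, b). g (int a - int b))"
    by (simp add: skellam_pmf_def P_def case_prod_unfold)
  also have "\<dots> = (\<Sum>\<^sub>\<infinity>ab. pmf P ab * (case ab of (a, b) \<Rightarrow> g (int a - int b)))"
    by (rule expectation_eq_infsum_pmf[where B=B]) (auto simp: bound split: prod.split)
  also have "\<dots> = (\<Sum>\<^sub>\<infinity>(a, b). pmf (poisson_pmf l1) a * pmf (poisson_pmf l2) b * g (int a - int b))"
    by (intro infsum_cong) (auto simp: P_def pmf_pair)
  also have "\<dots> = (\<Sum>\<^sub>\<infinity>a. pmf (poisson_pmf l1) a * (\<Sum>\<^sub>\<infinity>b. pmf (poisson_pmf l2) b * g (int a - int b)))"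
    by (rule infsum_pmf_pmf_iterated) (rule bound)
  finally show ?thesis .
qed

lemma expectation_M_skell:
  fixes g :: "int \<Rightarrow> real"
  assumes bound: "\<And>j. \<bar>g j\<bar> \<le> B"
  shows "measure_pmf.expectation (M_skell l1 l2 n) g
       = (\<Sum>\<^sub>\<infinity>a. pmf (poisson_pmf l1) a *
            (\<Sum>\<^sub>\<infinity>b. pmf (poisson_pmf l2) b * g (n + (int a - int b))))"
proof -
  have "measure_pmf.expectation (M_skell l1 l2 n) g = (\<Sum>\<^sub>\<infinity>j. f_Z j l1 l2 * g (n + j))"
    unfolding M_skell_def f_Z_def using bound by (simp add: expectation_eq_infsum_pmf[where B=B])
  also have "\<dots> = (\<Sum>\<^sub>\<infinity>a. pmf (poisson_pmf l1) a *
            (\<Sum>\<^sub>\<infinity>b. pmf (poisson_pmf l2) b * g (n + (int a - int b))))"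
    by (rule infsum_f_Z_mult) (rule bound)
  finally show ?thesis .
qed

definition alt_skellam_transform :: "real \<Rightarrow> real \<Rightarrow> (int \<Rightarrow> real) \<Rightarrow> int \<Rightarrow> real" where
  "alt_skellam_transform l1 l2 x k = (\<Sum>\<^sub>\<infinity>j. (-1) powi j * f_Z j l1 l2 * x (k + j))"

lemma alt_skellam_transform_iterated:
  fixes x :: "int \<Rightarrow> real"
  assumes bound: "\<And>n. \<bar>x n\<bar> \<le> B"
  shows "alt_skellam_transform l1 l2 x k
       = (\<Sum>\<^sub>\<infinity>a. pmf (poisson_pmf l1) a * (\<Sum>\<^sub>\<infinity>b. pmf (poisson_pmf l2) b *
            ((-1)^a * (-1)^b * x (k + int a - int b))))"
proof -
  have signed_bound: "\<bar>(-1) powi j * x (k + j)\<bar> \<le> B" for j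
    using bound[of "k + j"] by (simp add: abs_mult power_int_abs)
  have sign: "(-1::real) powi (int a - int b) = (-1)^a * (-1)^b" for a b
    by (cases "even b") (auto simp: power_int_diff)
  have "alt_skellam_transform l1 l2 x k = (\<Sum>\<^sub>\<infinity>j. f_Z j l1 l2 * ((-1) powi j * x (k + j)))"
    unfolding alt_skellam_transform_def by (simp add: mult_ac)
  also have "\<dots> = (\<Sum>\<^sub>\<infinity>a. pmf (poisson_pmf l1) a * (\<Sum>\<^sub>\<infinity>b. pmf (poisson_pmf l2) b *
            ((-1) powi (int a - int b) * x (k + (int a - int b)))))"
    by (rule infsum_f_Z_mult) (rule signed_bound)
  finally show ?thesis
    by (simp add: sign add_diff_eq)
qed

lemma abs_alt_skellam_transform_le:
  fixes x :: "int \<Rightarrow> real"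
  assumes bound: "\<And>n. \<bar>x n\<bar> \<le> B"
  shows "\<bar>alt_skellam_transform l1 l2 x k\<bar> \<le> B"
  unfolding alt_skellam_transform_iterated[OF bound]
  by (intro abs_infsum_pmf_mult_le) (use bound in \<open>simp add: abs_mult\<close>)

text \<open>Expanding both Skellam variables into their Poisson parts, the two Poisson parameters
  decouple and each contributes one alternating Poisson self-convolution.\<close>
lemma expectation_M_skell_alt_skellam_transform:
  fixes x :: "int \<Rightarrow> real"
  assumes l1: "l1 > 0" and l2: "l2 > 0" and bound: "\<And>n. \<bar>x n\<bar> \<le> B"
  shows "measure_pmf.expectation (M_skell l1 l2 n) (alt_skellam_transform l1 l2 x)
       = exp (-2*l1) * exp (-2*l2) * x n"
proof -
  define p1 where "p1 = poisson_pmf l1"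
  define p2 where "p2 = poisson_pmf l2"
  define G where "G = (\<lambda>a b a'. \<Sum>\<^sub>\<infinity>b'. pmf p2 b' *
      ((-1::real)^a' * (-1)^b' * x (n + (int a - int b) + int a' - int b')))"
  define h where "h = (\<lambda>s::nat. \<Sum>\<^sub>\<infinity>b. pmf p2 b *
      (\<Sum>\<^sub>\<infinity>b'. pmf p2 b' * ((-1::real)^b' * x (n + int s - int (b + b')))))"
  have sign_bound: "\<bar>(-1::real)^i * x k\<bar> \<le> B" for i k
    using bound[of k] by (simp add: abs_mult)
  have "\<bar>(-1::real)^i * (-1)^j * x k\<bar> \<le> B" for i j k
    using bound[of k] by (simp add: abs_mult)
  then have G_bound: "\<bar>G a b a'\<bar> \<le> B" for a b a'
    unfolding G_def by (rule abs_infsum_pmf_mult_le)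
  have h_bound: "\<bar>h s\<bar> \<le> B" for s
    unfolding h_def by (intro abs_infsum_pmf_mult_le sign_bound)
  have G_h: "(\<Sum>\<^sub>\<infinity>b. pmf p2 b * G a b a') = (-1)^a' * h (a + a')" for a a'
  proof -
    have G_eq: "G a b a' = (-1)^a' *
        (\<Sum>\<^sub>\<infinity>b'. pmf p2 b' * ((-1::real)^b' * x (n + int (a + a') - int (b + b'))))" for b
    proof -
      have "G a b a' = (\<Sum>\<^sub>\<infinity>b'. (-1)^a' *
          (pmf p2 b' * ((-1::real)^b' * x (n + int (a + a') - int (b + b')))))"
        unfolding G_def by (intro infsum_cong) (simp add: algebra_simps)
      also have "\<dots> = (-1)^a' *
          (\<Sum>\<^sub>\<infinity>b'. pmf p2 b' * ((-1::real)^b' * x (n + int (a + a') - int (b + b'))))"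
        by (rule infsum_cmult_right) (rule summable_on_pmf_mult_bounded, rule sign_bound)
      finally show ?thesis .
    qed
    have "(\<Sum>\<^sub>\<infinity>b. pmf p2 b * G a b a') = (\<Sum>\<^sub>\<infinity>b. (-1)^a' * (pmf p2 b *
        (\<Sum>\<^sub>\<infinity>b'. pmf p2 b' * ((-1::real)^b' * x (n + int (a + a') - int (b + b'))))))"
      by (intro infsum_cong) (simp add: G_eq algebra_simps)
    also have "\<dots> = (-1)^a' * h (a + a')"
      unfolding h_def
      by (rule infsum_cmult_right)
        (rule summable_on_pmf_mult_bounded, rule abs_infsum_pmf_mult_le, rule sign_bound)
    finally show ?thesis .
  qed
  have "measure_pmf.expectation (M_skell l1 l2 n) (alt_skellam_transform l1 l2 x)
      = (\<Sum>\<^sub>\<infinity>a. pmf p1 a * (\<Sum>\<^sub>\<infinity>b. pmf p2 b *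
            alt_skellam_transform l1 l2 x (n + (int a - int b))))"
    unfolding p1_def p2_def
    by (rule expectation_M_skell) (rule abs_alt_skellam_transform_le[OF bound])
  also have "\<dots> = (\<Sum>\<^sub>\<infinity>a. pmf p1 a * (\<Sum>\<^sub>\<infinity>b. pmf p2 b * (\<Sum>\<^sub>\<infinity>a'. pmf p1 a' * G a b a')))"
    by (simp add: alt_skellam_transform_iterated[OF bound] G_def p1_def p2_def)
  also have "\<dots> = (\<Sum>\<^sub>\<infinity>a. pmf p1 a * (\<Sum>\<^sub>\<infinity>a'. pmf p1 a' * (\<Sum>\<^sub>\<infinity>b. pmf p2 b * G a b a')))"
    by (intro infsum_cong arg_cong2[where f="(*)"] refl infsum_pmf_pmf_swap[where B=B] G_bound)
  also have "\<dots> = (\<Sum>\<^sub>\<infinity>a. pmf p1 a * (\<Sum>\<^sub>\<infinity>a'. pmf p1 a' * ((-1)^a' * h (a + a'))))"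
    by (simp add: G_h)
  also have "\<dots> = exp (-2*l1) * h 0"
    unfolding p1_def by (rule infsum_poisson_alternating_convolution[OF l1 h_bound])
  also have "h 0 = (\<Sum>\<^sub>\<infinity>b. pmf p2 b * (\<Sum>\<^sub>\<infinity>b'. pmf p2 b' * ((-1)^b' * x (n - int (b + b')))))"
    by (simp add: h_def)
  also have "\<dots> = exp (-2*l2) * x (n - int 0)"
    unfolding p2_def
    by (rule infsum_poisson_alternating_convolution[OF l2, where h="\<lambda>s. x (n - int s)"])
      (rule bound)
  finally show ?thesis
    by simp
qed

text \<open>The post-processing outputs \<open>1\<close> with probability \<open>q\<close> of the observed output, so
  the row of the output \<open>1\<close> is \<open>E[q]\<close>. If that row vanishes, so does \<open>x\<close>, which is the
  zero multiple of any row.\<close>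
lemma rowcone_scaled_expectation:
  fixes q :: "int \<Rightarrow> real"
  assumes M: "M \<in> CNF Priv" and q: "\<And>m. 0 \<le> q m" "\<And>m. q m \<le> 1" and c: "c \<ge> 0"
    and x: "\<And>n. x n = c * measure_pmf.expectation (M n) q"
  shows "x \<in> rowcone Priv"
proof -
  define A where "A = (\<lambda>m. map_pmf (of_bool :: bool \<Rightarrow> int) (bernoulli_pmf (q m)))"
  define M' where "M' = postproc A M"
  have "inj (of_bool :: bool \<Rightarrow> int)"
    by (rule injI) (simp add: of_bool_def split: if_splits)
  then have "pmf (A m) 1 = q m" for m
    using pmf_map_inj'[of "of_bool :: bool \<Rightarrow> int" "bernoulli_pmf (q m)" True] q
    by (simp add: A_def)
  then have x_row: "x n = c * pmf (M' n) 1" for n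
    by (simp add: x M'_def postproc_def pmf_bind)
  have M': "M' \<in> CNF Priv"
    unfolding M'_def by (rule CNF.post[OF M])
  show ?thesis
  proof (cases "1 \<in> alg_range M'")
    case True
    then show ?thesis
      unfolding rowcone_def using M' c x_row by blast
  next
    case False
    then have "x n = 0 * pmf (M' n) \<omega>" for n \<omega>
      by (auto simp: x_row alg_range_def set_pmf_iff)
    moreover obtain \<omega> where "\<omega> \<in> set_pmf (M' 0)"
      using set_pmf_not_empty[of "M' 0"] by (metis ex_in_conv)
    ultimately show ?thesis
      unfolding rowcone_def alg_range_def using M' by fastforce
  qed
qed

theorem theorem7:
  fixes l1 l2 :: real and x :: "int \<Rightarrow> real"
  assumes "l1 > 0" and "l2 > 0"
    and "bounded (range x)"
    and "\<And>k::int. (\<Sum>\<^sub>\<infinity>j\<in>(UNIV::int set). (-1) powi j * f_Z j l1 l2 * x (k + j)) \<ge> 0"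
  shows "x \<in> rowcone {M_skell l1 l2}"
proof -
  obtain B where bound: "\<And>n. \<bar>x n\<bar> \<le> B"
    using assms(3) by (auto simp: bounded_iff)
  define y where "y = alt_skellam_transform l1 l2 x"
  define D where "D = B + 1"
  have D: "D > 0"
    using bound[of 0] by (simp add: D_def)
  have "\<bar>y m\<bar> \<le> B" for m
    unfolding y_def by (rule abs_alt_skellam_transform_le[OF bound])
  moreover have "0 \<le> y m" for m
    using assms(4)[of m] by (simp add: y_def alt_skellam_transform_def)
  ultimately have y: "0 \<le> y m" "y m \<le> B" for m
    by (auto simp: abs_le_iff)
  have x_eq: "x n = (D * exp (2*l1) * exp (2*l2)) *
      measure_pmf.expectation (M_skell l1 l2 n) (\<lambda>m. y m / D)" for n
    using expectation_M_skell_alt_skellam_transform[OF assms(1,2) bound, of n] D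
    by (simp add: y_def exp_minus field_simps)
  show ?thesis
  proof (rule rowcone_scaled_expectation[where M="M_skell l1 l2" and q="\<lambda>m. y m / D"
        and c="D * exp (2*l1) * exp (2*l2)"])
    show "M_skell l1 l2 \<in> CNF {M_skell l1 l2}"
      by (rule CNF.base) simp
    show "0 \<le> y m / D" "y m / D \<le> 1" for m
      using y[of m] D by (simp_all add: D_def)
    show "0 \<le> D * exp (2*l1) * exp (2*l2)"
      using D by simp
  qed (rule x_eq)
qed

end
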